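(* There is an absolute constant $C>0$ such that for every $n\ge 2$ and every Boolean function $f:\{0,1\}^n\times\{0,1\}^n\to\{0,1\}$, $$Q^{\parallel}(f)\le C\cdot 2^{2\,R^{1,pub}(f)}\log n .$$
   Context: All protocols compute $f$ with error probability at most $1/3$ on every input. $Q^{\parallel}(f)$ is the minimal total number of qubits communicated in a quantum simultaneous-message-passing (SMP) protocol for $f$ with no shared randomness and no shared entanglement: Alice (holding $x$) and Bob (holding $y$) each send one quantum message to a referee who holds no input and outputs the answer. $R^{1,pub}(f)$ is the minimal number of bits of a classical one-way protocol (Alice sends a single message to Bob, who outputs the answer) where Alice and Bob share an unlimited amount of public randomness not counted in the cost. *)

theory Defs
  imports Complex_Main "HOL-Probability.Probability_Mass_Function" "Jordan_Normal_Form.Matrix"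
begin

(* Inputs x, y \<in> {0,1}^n are bit strings: bool lists of length n.
   A Boolean function f : {0,1}^n x {0,1}^n -> {0,1} is a bool-valued function;
   only its values on length-n lists matter. *)

definition mtrace :: "complex mat \<Rightarrow> complex" where
  "mtrace A = (\<Sum>i<dim_row A. A $$ (i, i))"

definition kron :: "complex mat \<Rightarrow> complex mat \<Rightarrow> complex mat" where
  "kron A B = mat (dim_row A * dim_row B) (dim_col A * dim_col B)
     (\<lambda>(i, j). A $$ (i div dim_row B, j div dim_col B) * B $$ (i mod dim_row B, j mod dim_col B))"

definition psd :: "nat \<Rightarrow> complex mat \<Rightarrow> bool" where
  "psd d A \<longleftrightarrow> A \<in> carrier_mat d d
     \<and> (\<forall>i<d. \<forall>j<d. A $$ (i, j) = cnj (A $$ (j, i)))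
     \<and> (\<forall>v :: nat \<Rightarrow> complex.
          (let q = (\<Sum>i<d. \<Sum>j<d. cnj (v i) * A $$ (i, j) * v j) in Im q = 0 \<and> Re q \<ge> 0))"

definition density :: "nat \<Rightarrow> complex mat \<Rightarrow> bool" where
  "density d \<rho> \<longleftrightarrow> psd d \<rho> \<and> mtrace \<rho> = 1"

text \<open>POVM element M (for outcome 1) of a two-outcome measurement {M, I - M}.\<close>
definition effect :: "nat \<Rightarrow> complex mat \<Rightarrow> bool" where
  "effect d M \<longleftrightarrow> psd d M \<and> psd d (1\<^sub>m d - M)"

text \<open>Alice sends qA qubits (state rho x on 2^qA dims), Bob sends qB qubits
  (state sigma y); the referee measures the product state rho x (x) sigma y with
  the two-outcome POVM {M, I-M} and outputs 1 on outcome M.\<close>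
definition qsmp_protocol :: "nat \<Rightarrow> (bool list \<Rightarrow> bool list \<Rightarrow> bool) \<Rightarrow> nat \<Rightarrow> nat \<Rightarrow> bool" where
  "qsmp_protocol n f qA qB \<longleftrightarrow>
     (\<exists>(\<rho> :: bool list \<Rightarrow> complex mat) (\<sigma> :: bool list \<Rightarrow> complex mat) (M :: complex mat).
        (\<forall>x. length x = n \<longrightarrow> density (2 ^ qA) (\<rho> x))
      \<and> (\<forall>y. length y = n \<longrightarrow> density (2 ^ qB) (\<sigma> y))
      \<and> effect (2 ^ (qA + qB)) M
      \<and> (\<forall>x y. length x = n \<longrightarrow> length y = n \<longrightarrow>
           (let p = Re (mtrace (M * kron (\<rho> x) (\<sigma> y)))
            in if f x y then p \<ge> 2/3 else 1 - p \<ge> 2/3)))"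

definition Qpar :: "nat \<Rightarrow> (bool list \<Rightarrow> bool list \<Rightarrow> bool) \<Rightarrow> nat" where
  "Qpar n f = (LEAST q. \<exists>qA qB. qA + qB = q \<and> qsmp_protocol n f qA qB)"

text \<open>A public-coin one-way protocol with c bits is a probability distribution
  (over the public random string, equivalently) over pairs (a, b) of deterministic
  protocols: Alice sends the c-bit message a x, Bob outputs b y (a x).\<close>
definition oneway_pub_protocol ::
  "nat \<Rightarrow> (bool list \<Rightarrow> bool list \<Rightarrow> bool) \<Rightarrow> nat \<Rightarrow> bool" where
  "oneway_pub_protocol n f c \<longleftrightarrow>
     (\<exists>P :: ((bool list \<Rightarrow> bool list) \<times> (bool list \<Rightarrow> bool list \<Rightarrow> bool)) pmf.
        (\<forall>ab \<in> set_pmf P. \<forall>x. length x = n \<longrightarrow> length (fst ab x) = c)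
      \<and> (\<forall>x y. length x = n \<longrightarrow> length y = n \<longrightarrow>
           measure_pmf.prob P {(a, b). b y (a x) = f x y} \<ge> 2/3))"

definition R1pub :: "nat \<Rightarrow> (bool list \<Rightarrow> bool list \<Rightarrow> bool) \<Rightarrow> nat" where
  "R1pub n f = (LEAST c. oneway_pub_protocol n f c)"

end

(* By Newman's argument, N = O(n) fixed samples of the public-coin protocol answer correctly
   on a 7/12-majority of the samples, simultaneously for all inputs. Encoding Alice's message
   in sample i as a basis vector, and Bob's answers to all possible messages as signs, gives
   unit vectors u_x, v_y of dimension N 2^c whose inner product is at least 1/(6 sqrt (2^c))
   if f x y holds and at most minus that otherwise. After prepending a common coordinate, the
   corresponding states have nonnegative overlap t = (1 + <u_x, v_y>) / 2, so a swap test
   rejects with probability (1 - t^2) / 2, which is monotone in <u_x, v_y>. By Hoeffding's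
   inequality, thresholding the number of rejections among K = O(2^c) independent swap tests
   computes f. Each player sends K states of log (N 2^c) + 1 = O(c + log n) qubits, in total
   O(2^c (c + log n)) = O(4^c log n) qubits. *)

theory Submission
  imports Defs "HOL-Probability.Hoeffding"
begin

lemma mtrace_mult:
  assumes "A \<in> carrier_mat d d" "B \<in> carrier_mat d d"
  shows "mtrace (A * B) = (\<Sum>I<d. \<Sum>J<d. A $$ (I, J) * B $$ (J, I))"
  using assms unfolding mtrace_def
  by (auto simp: scalar_prod_def intro!: sum.cong)

definition pure_state :: "nat \<Rightarrow> (nat \<Rightarrow> real) \<Rightarrow> complex mat" where
  "pure_state m w = mat m m (\<lambda>(i, j). complex_of_real (w i * w j))"

lemma density_pure_state:
  assumes "(\<Sum>i<m. (w i)\<^sup>2) = 1"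
  shows "density m (pure_state m w)"
proof -
  have quad: "(\<Sum>i<m. \<Sum>j<m. cnj (v i) * pure_state m w $$ (i, j) * v j)
      = complex_of_real ((cmod (\<Sum>j<m. complex_of_real (w j) * v j))\<^sup>2)" for v
  proof -
    have "(\<Sum>i<m. \<Sum>j<m. cnj (v i) * pure_state m w $$ (i, j) * v j)
        = (\<Sum>i<m. cnj (complex_of_real (w i) * v i)) * (\<Sum>j<m. complex_of_real (w j) * v j)"
      unfolding pure_state_def sum_product by (intro sum.cong refl) (simp add: mult_ac)
    also have "\<dots> = complex_of_real ((cmod (\<Sum>j<m. complex_of_real (w j) * v j))\<^sup>2)"
      by (simp only: cnj_sum[symmetric] complex_norm_square mult.commute)
    finally show ?thesis .
  qed
  have "mtrace (pure_state m w) = complex_of_real (\<Sum>i<m. (w i)\<^sup>2)"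
    unfolding mtrace_def pure_state_def by (simp add: power2_eq_square)
  then show ?thesis
    using assms unfolding density_def psd_def Let_def quad
    by (auto simp: pure_state_def mult.commute)
qed

lemma kron_pure_state:
  assumes "m > 0"
  shows "kron (pure_state m a) (pure_state m b)
     = pure_state (m * m) (\<lambda>I. a (I div m) * b (I mod m))"
proof (rule eq_matI)
  fix I J assume "I < dim_row (pure_state (m * m) (\<lambda>I. a (I div m) * b (I mod m)))"
    and "J < dim_col (pure_state (m * m) (\<lambda>I. a (I div m) * b (I mod m)))"
  then have "I < m * m" "J < m * m" by (simp_all add: pure_state_def)
  moreover from this have "I div m < m" "J div m < m" "I mod m < m" "J mod m < m"
    using assms by (auto simp: less_mult_imp_div_less)
  ultimately show "kron (pure_state m a) (pure_state m b) $$ (I, J)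
      = pure_state (m * m) (\<lambda>I. a (I div m) * b (I mod m)) $$ (I, J)"
    by (auto simp: kron_def pure_state_def mult_ac)
qed (auto simp: kron_def pure_state_def)

section \<open>Walsh characters\<close>

text \<open>Subsets of \<open>{..<K}\<close> under \<open>sym_diff\<close> form the group \<open>(\<int>/2)\<^sup>K\<close>, the cube group;
  \<open>walsh s\<close> are its characters.\<close>

definition walsh :: "nat set \<Rightarrow> nat set \<Rightarrow> real" where
  "walsh s U = (-1) ^ card (s \<inter> U)"

lemma walsh_commute: "walsh s U = walsh U s"
  unfolding walsh_def by (simp add: Int_commute)

lemma walsh_eq_prod:
  assumes "finite s"
  shows "walsh s U = (\<Prod>i\<in>s. if i \<in> U then -1 else 1)"
proof -
  have "(\<Prod>i\<in>s. if i \<in> U then -1 else 1) = (\<Prod>i\<in>{i\<in>s. i \<in> U}. -1 :: real)"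
    by (rule prod.inter_filter[OF assms, symmetric])
  also have "{i\<in>s. i \<in> U} = s \<inter> U" by auto
  finally show ?thesis unfolding walsh_def by simp
qed

lemma walsh_sym_diff:
  assumes "finite s"
  shows "walsh s (sym_diff U T) = walsh s U * walsh s T"
  unfolding walsh_eq_prod[OF assms] prod.distrib[symmetric] by (intro prod.cong) auto

lemma walsh_mult_self: "walsh s U * walsh s U = 1"
  unfolding walsh_def by (simp flip: power_add add: power_mult)

lemma prod_if_mem_power:
  assumes "finite A" "U \<subseteq> A"
  shows "(\<Prod>l\<in>A. if l \<in> U then x else y) = x ^ card U * y ^ (card A - card U)"
proof -
  have "(\<Prod>l\<in>A. if l \<in> U then x else y) = (\<Prod>l\<in>A - U. y) * (\<Prod>l\<in>U. x)"
    by (subst prod.subset_diff[OF assms(2,1)]) (auto intro!: arg_cong2[where f = "(*)"] prod.cong)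
  then show ?thesis
    using assms by (simp add: card_Diff_subset finite_subset mult.commute)
qed

lemma sum_walsh_power:
  assumes "finite A" "s \<subseteq> A"
  shows "(\<Sum>U\<in>Pow A. walsh s U * x ^ card U * y ^ (card A - card U))
       = (y - x) ^ card s * (y + x) ^ (card A - card s)"
proof -
  have "(\<Sum>U\<in>Pow A. walsh s U * x ^ card U * y ^ (card A - card U))
      = (\<Sum>U\<in>Pow A. (\<Prod>i\<in>U. if i \<in> s then - x else x) * (\<Prod>i\<in>A - U. y))"
  proof (intro sum.cong refl)
    fix U assume "U \<in> Pow A"
    then have U: "finite U" "U \<subseteq> A" using assms(1) finite_subset by auto
    have "walsh s U * x ^ card U = (\<Prod>i\<in>U. (if i \<in> s then -1 else 1) * x)"
      by (simp add: walsh_commute[of s] walsh_eq_prod[OF U(1)] prod.distrib)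
    also have "\<dots> = (\<Prod>i\<in>U. if i \<in> s then - x else x)"
      by (intro prod.cong) auto
    finally show "walsh s U * x ^ card U * y ^ (card A - card U)
        = (\<Prod>i\<in>U. if i \<in> s then - x else x) * (\<Prod>i\<in>A - U. y)"
      using U assms(1) by (simp add: card_Diff_subset)
  qed
  also have "\<dots> = (\<Prod>i\<in>A. (if i \<in> s then - x else x) + y)"
    by (rule prod_add[symmetric]) (rule assms(1))
  also have "\<dots> = (\<Prod>i\<in>A. if i \<in> s then y - x else y + x)"
    by (intro prod.cong) auto
  also have "\<dots> = (y - x) ^ card s * (y + x) ^ (card A - card s)"
    by (rule prod_if_mem_power[OF assms])
  finally show ?thesis .
qed

lemma sum_walsh:
  assumes "finite A" "U \<subseteq> A"
  shows "(\<Sum>s\<in>Pow A. walsh s U) = (if U = {} then 2 ^ card A else 0)"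
  using sum_walsh_power[OF assms, of 1 1] finite_subset[OF assms(2,1)]
  by (simp add: walsh_commute[of U] card_gt_0_iff)

section \<open>Isotypic projections of an action of the cube group\<close>

locale cube_action =
  fixes d K :: nat and act :: "nat set \<Rightarrow> nat \<Rightarrow> nat"
  assumes act_range: "\<And>U I. U \<subseteq> {..<K} \<Longrightarrow> I < d \<Longrightarrow> act U I < d"
    and act_sym_diff: "\<And>U T I. U \<subseteq> {..<K} \<Longrightarrow> T \<subseteq> {..<K} \<Longrightarrow> I < d \<Longrightarrow>
      act U (act T I) = act (sym_diff U T) I"
    and act_empty: "\<And>I. I < d \<Longrightarrow> act {} I = I"
begin

lemma sym_diff_cancel: "sym_diff (sym_diff U T) T = U"
  by auto

lemma act_act_self: "U \<subseteq> {..<K} \<Longrightarrow> I < d \<Longrightarrow> act U (act U I) = I"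
  by (simp add: act_sym_diff act_empty)

lemma sum_act_reindex:
  assumes "U \<subseteq> {..<K}"
  shows "(\<Sum>I<d. g (act U I)) = (\<Sum>I<d. g I)"
proof -
  have "bij_betw (act U) {..<d} {..<d}"
    by (rule bij_betwI[of _ _ _ "act U"]) (use assms act_range act_act_self in auto)
  then show ?thesis by (rule sum.reindex_bij_betw)
qed

text \<open>\<open>proj_entry s\<close> is the matrix of the projection onto the vectors on which each
  \<open>act U\<close> acts by the sign \<open>walsh s U\<close>; \<open>proj_vec v s\<close> is the projection of \<open>v\<close>.\<close>

definition proj_entry :: "nat set \<Rightarrow> nat \<Rightarrow> nat \<Rightarrow> complex" where
  "proj_entry s I J = (\<Sum>U\<in>Pow {..<K}. of_real (walsh s U) * of_bool (J = act U I)) / 2 ^ K"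

definition proj_vec :: "(nat \<Rightarrow> complex) \<Rightarrow> nat set \<Rightarrow> nat \<Rightarrow> complex" where
  "proj_vec v s I = (\<Sum>U\<in>Pow {..<K}. of_real (walsh s U) * v (act U I)) / 2 ^ K"

definition weighted_proj :: "(nat set \<Rightarrow> real) \<Rightarrow> complex mat" where
  "weighted_proj lam = mat d d (\<lambda>(I, J). \<Sum>s\<in>Pow {..<K}. of_real (lam s) * proj_entry s I J)"

lemma proj_entry_hermitian:
  assumes "I < d" "J < d"
  shows "proj_entry s I J = cnj (proj_entry s J I)"
proof -
  have "(J = act U I) = (I = act U J)" if "U \<in> Pow {..<K}" for U
    using that assms act_act_self by auto
  then have "proj_entry s I J = proj_entry s J I"
    unfolding proj_entry_def by (intro arg_cong[where f = "\<lambda>z. z / 2 ^ K"] sum.cong) auto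
  moreover have "cnj (proj_entry s J I) = proj_entry s J I"
    unfolding proj_entry_def by (simp add: cnj_sum)
  ultimately show ?thesis by simp
qed

lemma proj_entry_mult_vec:
  assumes "I < d"
  shows "(\<Sum>J<d. proj_entry s I J * v J) = proj_vec v s I"
proof -
  have "(\<Sum>J<d. proj_entry s I J * v J)
      = (\<Sum>U\<in>Pow {..<K}. \<Sum>J<d. of_real (walsh s U) / 2 ^ K * (of_bool (J = act U I) * v J))"
    unfolding proj_entry_def sum_divide_distrib sum_distrib_right
    by (subst sum.swap) (simp add: mult_ac)
  also have "\<dots> = (\<Sum>U\<in>Pow {..<K}. of_real (walsh s U) / 2 ^ K * v (act U I))"
  proof (intro sum.cong refl)
    fix U assume "U \<in> Pow {..<K}"
    then have "act U I \<in> {..<d}" using assms act_range by auto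
    then show "(\<Sum>J<d. of_real (walsh s U) / 2 ^ K * (of_bool (J = act U I) * v J))
        = of_real (walsh s U) / 2 ^ K * v (act U I)"
      by (subst sum.cong[OF refl, where h = "\<lambda>J. if J = act U I then of_real (walsh s U) / 2 ^ K * v J else 0"])
        auto
  qed
  also have "\<dots> = proj_vec v s I"
    unfolding proj_vec_def by (simp add: sum_divide_distrib)
  finally show ?thesis .
qed

lemma proj_vec_act:
  assumes "T \<subseteq> {..<K}" "I < d" "s \<subseteq> {..<K}"
  shows "proj_vec v s (act T I) = of_real (walsh s T) * proj_vec v s I"
proof -
  have fin: "finite s" using assms(3) finite_subset by blast
  have bij: "bij_betw (\<lambda>U. sym_diff U T) (Pow {..<K}) (Pow {..<K})"
    by (rule bij_betwI[of _ _ _ "\<lambda>U. sym_diff U T"]) (use assms(1) in auto)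
  have "proj_vec v s (act T I)
      = (\<Sum>U\<in>Pow {..<K}. of_real (walsh s U) * v (act (sym_diff U T) I)) / 2 ^ K"
    unfolding proj_vec_def using assms by (simp add: act_sym_diff)
  also have "\<dots> = (\<Sum>U\<in>Pow {..<K}. of_real (walsh s (sym_diff U T))
                      * v (act (sym_diff (sym_diff U T) T) I)) / 2 ^ K"
    by (subst sum.reindex_bij_betw[OF bij, symmetric]) simp
  also have "\<dots> = (\<Sum>U\<in>Pow {..<K}. of_real (walsh s T) * (of_real (walsh s U) * v (act U I))) / 2 ^ K"
    by (intro arg_cong[where f = "\<lambda>z. z / 2 ^ K"] sum.cong refl)
      (simp add: walsh_sym_diff[OF fin] sym_diff_cancel mult_ac)
  also have "\<dots> = of_real (walsh s T) * proj_vec v s I"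
    unfolding proj_vec_def by (simp add: sum_distrib_left)
  finally show ?thesis .
qed

lemma proj_vec_inner:
  assumes "s \<subseteq> {..<K}"
  shows "(\<Sum>I<d. cnj (v I) * proj_vec v s I) = (\<Sum>I<d. cnj (proj_vec v s I) * proj_vec v s I)"
proof -
  let ?P = "proj_vec v s"
  have "(\<Sum>I<d. cnj (?P I) * ?P I)
      = (\<Sum>I<d. \<Sum>U\<in>Pow {..<K}. of_real (walsh s U) * cnj (v (act U I)) * ?P I) / 2 ^ K"
    unfolding proj_vec_def[of v s] by (simp add: cnj_sum sum_divide_distrib sum_distrib_right)
  also have "\<dots> = (\<Sum>U\<in>Pow {..<K}. of_real (walsh s U) * (\<Sum>I<d. cnj (v (act U I)) * ?P I)) / 2 ^ K"
    by (subst sum.swap) (simp add: sum_distrib_left mult.assoc)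
  also have "\<dots> = (\<Sum>U\<in>Pow {..<K}. (\<Sum>I<d. cnj (v I) * ?P I)) / 2 ^ K"
  proof (intro arg_cong[where f = "\<lambda>z. z / 2 ^ K"] sum.cong refl)
    fix U assume U: "U \<in> Pow {..<K}"
    have "(\<Sum>I<d. cnj (v (act U I)) * ?P I) = (\<Sum>I<d. cnj (v (act U (act U I))) * ?P (act U I))"
      using U by (intro sum_act_reindex[symmetric]) auto
    also have "\<dots> = of_real (walsh s U) * (\<Sum>I<d. cnj (v I) * ?P I)"
      using U assms by (simp add: act_act_self proj_vec_act sum_distrib_left mult_ac)
    finally show "of_real (walsh s U) * (\<Sum>I<d. cnj (v (act U I)) * ?P I) = (\<Sum>I<d. cnj (v I) * ?P I)"
      by (simp add: mult.assoc[symmetric] of_real_mult[symmetric] walsh_mult_self)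
  qed
  also have "\<dots> = (\<Sum>I<d. cnj (v I) * ?P I)"
    by (simp add: card_Pow)
  finally show ?thesis by simp
qed

lemma sum_proj_entry:
  assumes "I < d" "J < d"
  shows "(\<Sum>s\<in>Pow {..<K}. proj_entry s I J) = of_bool (J = I)"
proof -
  have "(\<Sum>s\<in>Pow {..<K}. proj_entry s I J)
      = (\<Sum>U\<in>Pow {..<K}. of_real (\<Sum>s\<in>Pow {..<K}. walsh s U) * of_bool (J = act U I)) / 2 ^ K"
    unfolding proj_entry_def sum_divide_distrib[symmetric]
    by (subst sum.swap) (simp only: of_real_sum sum_distrib_right)
  also have "\<dots> = (\<Sum>U\<in>Pow {..<K}. if U = {} then 2 ^ K * of_bool (J = I) else 0) / 2 ^ K"
    using assms by (intro arg_cong[where f = "\<lambda>z. z / 2 ^ K"] sum.cong refl)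
      (auto simp: sum_walsh act_empty)
  also have "\<dots> = of_bool (J = I)"
    by simp
  finally show ?thesis .
qed

lemma weighted_proj_mult_vec:
  assumes "I < d"
  shows "(\<Sum>J<d. weighted_proj lam $$ (I, J) * v J)
       = (\<Sum>s\<in>Pow {..<K}. of_real (lam s) * proj_vec v s I)"
proof -
  have "(\<Sum>J<d. weighted_proj lam $$ (I, J) * v J)
      = (\<Sum>J<d. \<Sum>s\<in>Pow {..<K}. of_real (lam s) * (proj_entry s I J * v J))"
    using assms by (intro sum.cong refl) (simp add: weighted_proj_def sum_distrib_right mult.assoc)
  also have "\<dots> = (\<Sum>s\<in>Pow {..<K}. of_real (lam s) * (\<Sum>J<d. proj_entry s I J * v J))"
    by (subst sum.swap) (simp add: sum_distrib_left)
  also have "\<dots> = (\<Sum>s\<in>Pow {..<K}. of_real (lam s) * proj_vec v s I)"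
    using assms by (simp add: proj_entry_mult_vec)
  finally show ?thesis .
qed

lemma quadratic_form_weighted_proj:
  "(\<Sum>I<d. \<Sum>J<d. cnj (v I) * weighted_proj lam $$ (I, J) * v J)
     = of_real (\<Sum>s\<in>Pow {..<K}. lam s * (\<Sum>I<d. (cmod (proj_vec v s I))\<^sup>2))"
proof -
  have "(\<Sum>I<d. \<Sum>J<d. cnj (v I) * weighted_proj lam $$ (I, J) * v J)
      = (\<Sum>I<d. cnj (v I) * (\<Sum>s\<in>Pow {..<K}. of_real (lam s) * proj_vec v s I))"
    by (intro sum.cong refl)
      (simp add: weighted_proj_mult_vec[symmetric] sum_distrib_left mult.assoc)
  also have "\<dots> = (\<Sum>I<d. \<Sum>s\<in>Pow {..<K}. of_real (lam s) * (cnj (v I) * proj_vec v s I))"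
    by (simp add: sum_distrib_left mult.left_commute)
  also have "\<dots> = (\<Sum>s\<in>Pow {..<K}. of_real (lam s) * (\<Sum>I<d. cnj (v I) * proj_vec v s I))"
    by (subst sum.swap) (simp add: sum_distrib_left)
  also have "\<dots> = (\<Sum>s\<in>Pow {..<K}. of_real (lam s) * (\<Sum>I<d. cnj (proj_vec v s I) * proj_vec v s I))"
    by (intro sum.cong refl) (simp add: proj_vec_inner)
  also have "\<dots> = of_real (\<Sum>s\<in>Pow {..<K}. lam s * (\<Sum>I<d. (cmod (proj_vec v s I))\<^sup>2))"
    by (simp only: of_real_sum of_real_mult complex_norm_square mult.commute)
  finally show ?thesis .
qed

lemma weighted_proj_hermitian:
  assumes "I < d" "J < d"
  shows "weighted_proj lam $$ (I, J) = cnj (weighted_proj lam $$ (J, I))"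
  using proj_entry_hermitian[OF assms] assms by (simp add: weighted_proj_def cnj_sum)

lemma psd_weighted_proj:
  assumes "\<And>s. s \<subseteq> {..<K} \<Longrightarrow> lam s \<ge> 0"
  shows "psd d (weighted_proj lam)"
  unfolding psd_def Let_def quadratic_form_weighted_proj
proof (intro conjI allI impI)
  show "weighted_proj lam \<in> carrier_mat d d"
    by (simp add: weighted_proj_def)
next
  fix I J assume "I < d" "J < d"
  then show "weighted_proj lam $$ (I, J) = cnj (weighted_proj lam $$ (J, I))"
    by (rule weighted_proj_hermitian)
next
  fix v :: "nat \<Rightarrow> complex"
  show "Im (of_real (\<Sum>s\<in>Pow {..<K}. lam s * (\<Sum>I<d. (cmod (proj_vec v s I))\<^sup>2))) = 0"
    by simp
  show "0 \<le> Re (of_real (\<Sum>s\<in>Pow {..<K}. lam s * (\<Sum>I<d. (cmod (proj_vec v s I))\<^sup>2)))"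
    using assms by (auto intro!: sum_nonneg mult_nonneg_nonneg)
qed

lemma effect_weighted_proj:
  assumes "\<And>s. s \<subseteq> {..<K} \<Longrightarrow> 0 \<le> lam s \<and> lam s \<le> 1"
  shows "effect d (weighted_proj lam)"
proof -
  have "1\<^sub>m d - weighted_proj lam = weighted_proj (\<lambda>s. 1 - lam s)"
    by (rule eq_matI)
      (auto simp: weighted_proj_def sum_proj_entry algebra_simps sum_subtractf)
  then show ?thesis
    unfolding effect_def using assms by (auto intro!: psd_weighted_proj)
qed

lemma trace_weighted_proj_pure_state:
  "mtrace (weighted_proj lam * pure_state d W)
    = of_real (\<Sum>s\<in>Pow {..<K}. lam s * (\<Sum>U\<in>Pow {..<K}. walsh s U * (\<Sum>I<d. W (act U I) * W I)) / 2 ^ K)"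
proof -
  have "mtrace (weighted_proj lam * pure_state d W)
      = (\<Sum>I<d. \<Sum>J<d. weighted_proj lam $$ (I, J) * of_real (W J * W I))"
    by (subst mtrace_mult[of _ d]) (auto simp: weighted_proj_def pure_state_def)
  also have "\<dots> = (\<Sum>I<d. \<Sum>s\<in>Pow {..<K}. of_real (lam s) * proj_vec (\<lambda>J. of_real (W J * W I)) s I)"
    by (intro sum.cong refl) (simp add: weighted_proj_mult_vec)
  also have "\<dots> = of_real (\<Sum>I<d. \<Sum>s\<in>Pow {..<K}.
                        lam s * (\<Sum>U\<in>Pow {..<K}. walsh s U * (W (act U I) * W I)) / 2 ^ K)"
    unfolding proj_vec_def
    by (simp only: of_real_sum of_real_mult of_real_divide of_real_power of_real_numeral
        times_divide_eq_right)
  also have "(\<Sum>I<d. \<Sum>s\<in>Pow {..<K}. lam s * (\<Sum>U\<in>Pow {..<K}. walsh s U * (W (act U I) * W I)) / 2 ^ K)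
      = (\<Sum>s\<in>Pow {..<K}. lam s * (\<Sum>I<d. \<Sum>U\<in>Pow {..<K}. walsh s U * (W (act U I) * W I)) / 2 ^ K)"
    by (subst sum.swap) (simp only: sum_divide_distrib sum_distrib_left)
  also have "\<dots> = (\<Sum>s\<in>Pow {..<K}. lam s * (\<Sum>U\<in>Pow {..<K}. walsh s U * (\<Sum>I<d. W (act U I) * W I)) / 2 ^ K)"
  proof (intro sum.cong refl)
    fix s
    show "lam s * (\<Sum>I<d. \<Sum>U\<in>Pow {..<K}. walsh s U * (W (act U I) * W I)) / 2 ^ K
        = lam s * (\<Sum>U\<in>Pow {..<K}. walsh s U * (\<Sum>I<d. W (act U I) * W I)) / 2 ^ K"
      by (subst sum.swap) (simp only: sum_distrib_left)
  qed
  finally show ?thesis .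
qed

end

section \<open>Parallel swap tests\<close>

lemma bij_betw_div_mod:
  fixes m n :: nat
  shows "bij_betw (\<lambda>I. (I div n, I mod n)) {..<m * n} ({..<m} \<times> {..<n})"
proof (rule bij_betwI[where g = "\<lambda>(i, j). i * n + j"])
  show "(\<lambda>I. (I div n, I mod n)) \<in> {..<m * n} \<rightarrow> {..<m} \<times> {..<n}"
  proof
    fix I assume "I \<in> {..<m * n}"
    moreover from this have "n \<noteq> 0" by (cases n) auto
    ultimately show "(I div n, I mod n) \<in> {..<m} \<times> {..<n}"
      by (auto simp: less_mult_imp_div_less)
  qed
  show "(\<lambda>(i, j). i * n + j) \<in> {..<m} \<times> {..<n} \<rightarrow> {..<m * n}"
  proof
    fix z assume "z \<in> {..<m} \<times> {..<n}"
    then obtain i j where z: "z = (i, j)" "i < m" "j < n" by auto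
    have "i * n + j < (i + 1) * n" using z by simp
    also have "\<dots> \<le> m * n" using z by (intro mult_right_mono) auto
    finally show "(\<lambda>(i, j). i * n + j) z \<in> {..<m * n}" using z by simp
  qed
  show "(\<lambda>(i, j). i * n + j) (I div n, I mod n) = I" for I
    by simp
  show "(\<lambda>I. (I div n, I mod n)) ((\<lambda>(i, j). i * n + j) z) = z" if z_mem: "z \<in> {..<m} \<times> {..<n}" for z
  proof -
    obtain i j where z: "z = (i, j)" "j < n" using z_mem by auto
    then have "n \<noteq> 0" by simp
    with z show ?thesis by simp
  qed
qed

definition tuple_enum :: "nat \<Rightarrow> nat \<Rightarrow> nat \<Rightarrow> nat \<Rightarrow> nat" where
  "tuple_enum D K = (SOME e. bij_betw e {..<D ^ K} (PiE {..<K} (\<lambda>_. {..<D})))"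

lemma bij_tuple_enum: "bij_betw (tuple_enum D K) {..<D ^ K} (PiE {..<K} (\<lambda>_. {..<D}))"
proof -
  have "finite (PiE {..<K} (\<lambda>_. {..<D}))" "card (PiE {..<K} (\<lambda>_. {..<D})) = D ^ K"
    by (simp_all add: finite_PiE card_PiE)
  then have "\<exists>e. bij_betw e {..<D ^ K} (PiE {..<K} (\<lambda>_. {..<D}))"
    using ex_bij_betw_nat_finite by (metis atLeast0LessThan)
  then show ?thesis
    unfolding tuple_enum_def by (rule someI_ex)
qed

definition tensor_power :: "nat \<Rightarrow> nat \<Rightarrow> (nat \<Rightarrow> real) \<Rightarrow> nat \<Rightarrow> real" where
  "tensor_power D K a i = (\<Prod>l<K. a (tuple_enum D K i l))"

lemma sum_tensor_power_square:
  "(\<Sum>i<D ^ K. (tensor_power D K a i)\<^sup>2) = (\<Sum>j<D. (a j)\<^sup>2) ^ K"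
proof -
  have "(\<Sum>i<D ^ K. (tensor_power D K a i)\<^sup>2) = (\<Sum>g\<in>PiE {..<K} (\<lambda>_. {..<D}). \<Prod>l<K. (a (g l))\<^sup>2)"
    unfolding tensor_power_def prod_power_distrib
    by (rule sum.reindex_bij_betw[OF bij_tuple_enum, where g = "\<lambda>g. \<Prod>l<K. (a (g l))\<^sup>2"])
  also have "\<dots> = (\<Prod>l<K. \<Sum>j<D. (a j)\<^sup>2)"
    by (rule prod_sum_PiE[symmetric]) auto
  also have "\<dots> = (\<Sum>j<D. (a j)\<^sup>2) ^ K"
    by simp
  finally show ?thesis .
qed

definition swap_coords :: "nat set \<Rightarrow> (nat \<Rightarrow> 'a) \<times> (nat \<Rightarrow> 'a) \<Rightarrow> (nat \<Rightarrow> 'a) \<times> (nat \<Rightarrow> 'a)" where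
  "swap_coords U z = ((\<lambda>l. if l \<in> U then snd z l else fst z l), (\<lambda>l. if l \<in> U then fst z l else snd z l))"

lemma swap_coords_PiE:
  "z \<in> PiE A B \<times> PiE A B \<Longrightarrow> swap_coords U z \<in> PiE A B \<times> PiE A B"
  unfolding swap_coords_def by (auto simp: PiE_def Pi_def extensional_def)

lemma swap_coords_swap_coords: "swap_coords U (swap_coords T z) = swap_coords (sym_diff U T) z"
  unfolding swap_coords_def by (auto simp: fun_eq_iff)

lemma swap_coords_empty: "swap_coords {} z = z"
  unfolding swap_coords_def by simp

lemma sum_swap_coords_overlap:
  fixes a b :: "'a \<Rightarrow> real"
  assumes "finite A" "U \<subseteq> {..<K}"
  shows "(\<Sum>z\<in>PiE {..<K} (\<lambda>_. A) \<times> PiE {..<K} (\<lambda>_. A).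
            (\<Prod>l<K. a (fst (swap_coords U z) l)) * (\<Prod>l<K. b (snd (swap_coords U z) l))
            * ((\<Prod>l<K. a (fst z l)) * (\<Prod>l<K. b (snd z l))))
       = ((\<Sum>i\<in>A. a i * b i)\<^sup>2) ^ card U * ((\<Sum>i\<in>A. (a i)\<^sup>2) * (\<Sum>j\<in>A. (b j)\<^sup>2)) ^ (K - card U)"
proof -
  define F where "F l i j = (if l \<in> U then a i * b i * (a j * b j) else (a i)\<^sup>2 * (b j)\<^sup>2)"
    for l i j
  have "(\<Prod>l<K. a (fst (swap_coords U z) l)) * (\<Prod>l<K. b (snd (swap_coords U z) l))
          * ((\<Prod>l<K. a (fst z l)) * (\<Prod>l<K. b (snd z l)))
      = (\<Prod>l<K. F l (fst z l) (snd z l))" for z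
    unfolding swap_coords_def F_def prod.distrib[symmetric]
    by (intro prod.cong refl) (simp add: power2_eq_square mult_ac)
  then have "(\<Sum>z\<in>PiE {..<K} (\<lambda>_. A) \<times> PiE {..<K} (\<lambda>_. A).
            (\<Prod>l<K. a (fst (swap_coords U z) l)) * (\<Prod>l<K. b (snd (swap_coords U z) l))
            * ((\<Prod>l<K. a (fst z l)) * (\<Prod>l<K. b (snd z l))))
      = (\<Sum>g\<in>PiE {..<K} (\<lambda>_. A). \<Sum>h\<in>PiE {..<K} (\<lambda>_. A). \<Prod>l<K. F l (g l) (h l))"
    by (simp add: sum.cartesian_product case_prod_unfold)
  also have "\<dots> = (\<Sum>g\<in>PiE {..<K} (\<lambda>_. A). \<Prod>l<K. \<Sum>j\<in>A. F l (g l) j)"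
    by (intro sum.cong refl) (rule prod_sum_PiE[symmetric]; use assms(1) in auto)
  also have "\<dots> = (\<Prod>l<K. \<Sum>i\<in>A. \<Sum>j\<in>A. F l i j)"
    by (rule prod_sum_PiE[symmetric]) (use assms(1) in auto)
  also have "\<dots> = (\<Prod>l<K. if l \<in> U then (\<Sum>i\<in>A. a i * b i)\<^sup>2
                            else (\<Sum>i\<in>A. (a i)\<^sup>2) * (\<Sum>j\<in>A. (b j)\<^sup>2))"
    by (intro prod.cong refl) (simp add: F_def power2_eq_square sum_product)
  also have "\<dots> = ((\<Sum>i\<in>A. a i * b i)\<^sup>2) ^ card U * ((\<Sum>i\<in>A. (a i)\<^sup>2) * (\<Sum>j\<in>A. (b j)\<^sup>2)) ^ (K - card U)"
    using prod_if_mem_power[OF _ assms(2)] by simp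
  finally show ?thesis .
qed

lemma cube_action_transport:
  assumes E: "bij_betw E {..<d} X"
    and into: "\<And>U z. z \<in> X \<Longrightarrow> \<sigma> U z \<in> X"
    and comp: "\<And>U T z. \<sigma> U (\<sigma> T z) = \<sigma> (sym_diff U T) z"
    and empty: "\<And>z. \<sigma> {} z = z"
  shows "cube_action d K (\<lambda>U I. inv_into {..<d} E (\<sigma> U (E I)))"
proof
  have X: "X = E ` {..<d}" and inj: "inj_on E {..<d}"
    using E by (auto simp: bij_betw_def)
  have img: "\<sigma> U (E I) \<in> E ` {..<d}" if "I < d" for U I
    using into that unfolding X by blast
  have E_inv: "E (inv_into {..<d} E (\<sigma> U (E I))) = \<sigma> U (E I)" if "I < d" for U I
    using img[OF that] by (rule f_inv_into_f)
  show "inv_into {..<d} E (\<sigma> U (E I)) < d" if "I < d" for U I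
    using inv_into_into[OF img[OF that]] by simp
  show "inv_into {..<d} E (\<sigma> U (E (inv_into {..<d} E (\<sigma> T (E I)))))
      = inv_into {..<d} E (\<sigma> (sym_diff U T) (E I))" if "I < d" for U T I
    using that by (simp add: E_inv comp)
  show "inv_into {..<d} E (\<sigma> {} (E I)) = I" if "I < d" for I
    using inj that by (simp add: empty inv_into_f_f)
qed
definition tensor_power_pair :: "nat \<Rightarrow> nat \<Rightarrow> (nat \<Rightarrow> real) \<Rightarrow> (nat \<Rightarrow> real) \<Rightarrow> nat \<Rightarrow> real" where
  "tensor_power_pair D K a b I = tensor_power D K a (I div D ^ K) * tensor_power D K b (I mod D ^ K)"

lemma exists_swap_action:
  assumes D: "D > 0"
  obtains act where "cube_action (D ^ K * D ^ K) K act"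
    and "\<And>U a b. U \<subseteq> {..<K} \<Longrightarrow>
      (\<Sum>I<D ^ K * D ^ K. tensor_power_pair D K a b (act U I) * tensor_power_pair D K a b I)
      = ((\<Sum>i<D. a i * b i)\<^sup>2) ^ card U * ((\<Sum>i<D. (a i)\<^sup>2) * (\<Sum>j<D. (b j)\<^sup>2)) ^ (K - card U)"
proof -
  define m where "m = D ^ K"
  define F where "F = PiE {..<K} (\<lambda>_. {..<D})"
  define E where "E = map_prod (tuple_enum D K) (tuple_enum D K) \<circ> (\<lambda>I. (I div m, I mod m))"
  define act where "act U I = inv_into {..<m * m} E (swap_coords U (E I))" for U I
  have bij_E: "bij_betw E {..<m * m} (F \<times> F)"
    unfolding E_def F_def m_def
    by (intro bij_betw_trans[OF bij_betw_div_mod] bij_betw_map_prod bij_tuple_enum)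
  have E_mem: "E I \<in> F \<times> F" if "I < m * m" for I
    using bij_E that by (auto simp: bij_betw_def)
  have E_act: "E (act U I) = swap_coords U (E I)" if "I < m * m" for U I
    unfolding act_def using bij_E swap_coords_PiE[OF E_mem[OF that, unfolded F_def]]
    by (intro f_inv_into_f) (simp add: bij_betw_def F_def)
  have "cube_action (m * m) K act"
    unfolding act_def using bij_E
    by (rule cube_action_transport) (auto simp: F_def swap_coords_PiE swap_coords_swap_coords swap_coords_empty)
  moreover have "(\<Sum>I<m * m. tensor_power_pair D K a b (act U I) * tensor_power_pair D K a b I)
      = ((\<Sum>i<D. a i * b i)\<^sup>2) ^ card U * ((\<Sum>i<D. (a i)\<^sup>2) * (\<Sum>j<D. (b j)\<^sup>2)) ^ (K - card U)"
    if U: "U \<subseteq> {..<K}" for U a b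
  proof -
    define G where "G z = (\<Prod>l<K. a (fst z l)) * (\<Prod>l<K. b (snd z l))" for z
    have "tensor_power_pair D K a b I = G (E I)" for I
      by (simp add: tensor_power_pair_def tensor_power_def G_def E_def m_def)
    then have "(\<Sum>I<m * m. tensor_power_pair D K a b (act U I) * tensor_power_pair D K a b I)
        = (\<Sum>I<m * m. G (swap_coords U (E I)) * G (E I))"
      by (intro sum.cong refl) (simp add: E_act)
    also have "\<dots> = (\<Sum>z\<in>F \<times> F. G (swap_coords U z) * G z)"
      by (rule sum.reindex_bij_betw[OF bij_E])
    finally show ?thesis
      unfolding F_def G_def using sum_swap_coords_overlap[OF _ U, of "{..<D}" a b] by simp
  qed
  ultimately show ?thesis
    using that unfolding m_def by blast
qed

text \<open>In position \<open>l\<close>, the action exchanges the \<open>l\<close>-th copy of \<open>a\<close> with the \<open>l\<close>-th copy of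
  \<open>b\<close>; the projection for \<open>s\<close> is then the outcome in which exactly the swap tests at the
  positions in \<open>s\<close> reject.\<close>

lemma swap_tests_povm:
  assumes D: "D > 0"
    and lam: "\<And>s. s \<subseteq> {..<K} \<Longrightarrow> 0 \<le> lam s \<and> lam s \<le> 1"
  shows "\<exists>M. effect (D ^ K * D ^ K) M \<and>
    (\<forall>a b. (\<Sum>i<D. (a i)\<^sup>2) = 1 \<longrightarrow> (\<Sum>i<D. (b i)\<^sup>2) = 1 \<longrightarrow>
       Re (mtrace (M * kron (pure_state (D ^ K) (tensor_power D K a)) (pure_state (D ^ K) (tensor_power D K b))))
       = (\<Sum>s\<in>Pow {..<K}. lam s * ((1 - (\<Sum>i<D. a i * b i)\<^sup>2) / 2) ^ card s
                              * ((1 + (\<Sum>i<D. a i * b i)\<^sup>2) / 2) ^ (K - card s)))"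
proof -
  obtain act where act: "cube_action (D ^ K * D ^ K) K act"
    and overlap: "\<And>U a b. U \<subseteq> {..<K} \<Longrightarrow>
      (\<Sum>I<D ^ K * D ^ K. tensor_power_pair D K a b (act U I) * tensor_power_pair D K a b I)
      = ((\<Sum>i<D. a i * b i)\<^sup>2) ^ card U * ((\<Sum>i<D. (a i)\<^sup>2) * (\<Sum>j<D. (b j)\<^sup>2)) ^ (K - card U)"
    using exists_swap_action[OF D] by blast
  interpret cube_action "D ^ K * D ^ K" K act
    by (rule act)
  show ?thesis
  proof (intro exI conjI allI impI)
    show "effect (D ^ K * D ^ K) (weighted_proj lam)"
      using lam by (rule effect_weighted_proj)
    fix a b :: "nat \<Rightarrow> real"
    assume a: "(\<Sum>i<D. (a i)\<^sup>2) = 1" and b: "(\<Sum>i<D. (b i)\<^sup>2) = 1"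
    define t where "t = (\<Sum>i<D. a i * b i)"
    have "mtrace (weighted_proj lam * kron (pure_state (D ^ K) (tensor_power D K a))
                                         (pure_state (D ^ K) (tensor_power D K b)))
        = of_real (\<Sum>s\<in>Pow {..<K}. lam s * (\<Sum>U\<in>Pow {..<K}. walsh s U * (t\<^sup>2) ^ card U) / 2 ^ K)"
      unfolding kron_pure_state[OF zero_less_power[OF D]] tensor_power_pair_def[symmetric]
        trace_weighted_proj_pure_state
      by (simp add: overlap a b t_def)
    also have "\<dots> = of_real (\<Sum>s\<in>Pow {..<K}. lam s * ((1 - t\<^sup>2) / 2) ^ card s * ((1 + t\<^sup>2) / 2) ^ (K - card s))"
    proof (intro arg_cong[where f = of_real] sum.cong refl)
      fix s assume "s \<in> Pow {..<K}"
      then have s: "s \<subseteq> {..<K}" "card s \<le> K"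
        using card_mono[of "{..<K}" s] by auto
      have "(2::real) ^ K = 2 ^ card s * 2 ^ (K - card s)"
        using s by (simp flip: power_add)
      then show "lam s * (\<Sum>U\<in>Pow {..<K}. walsh s U * (t\<^sup>2) ^ card U) / 2 ^ K
          = lam s * ((1 - t\<^sup>2) / 2) ^ card s * ((1 + t\<^sup>2) / 2) ^ (K - card s)"
        using sum_walsh_power[of "{..<K}" s "t\<^sup>2" 1] s by (simp add: power_divide)
    qed
    finally show "Re (mtrace (weighted_proj lam * kron (pure_state (D ^ K) (tensor_power D K a))
        (pure_state (D ^ K) (tensor_power D K b))))
       = (\<Sum>s\<in>Pow {..<K}. lam s * ((1 - (\<Sum>i<D. a i * b i)\<^sup>2) / 2) ^ card s
                              * ((1 + (\<Sum>i<D. a i * b i)\<^sup>2) / 2) ^ (K - card s))"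
      by (simp only: t_def Re_complex_of_real)
  qed
qed

lemma sum_Pow_binomial:
  assumes q: "0 \<le> q" "q \<le> 1"
  shows "(\<Sum>s\<in>Pow {..<K}. of_bool (card s \<in> A) * (q ^ card s * (1 - q) ^ (K - card s)))
       = measure_pmf.prob (binomial_pmf K q) A"
proof -
  define h where "h j = of_bool (j \<in> A) * (q ^ j * (1 - q) ^ (K - j))" for j
  have "(\<Sum>s\<in>Pow {..<K}. of_bool (card s \<in> A) * (q ^ card s * (1 - q) ^ (K - card s)))
      = (\<Sum>j\<le>K. \<Sum>s\<in>{s\<in>Pow {..<K}. card s = j}. h (card s))"
    unfolding h_def by (rule sum.group[symmetric]) (auto intro: card_mono[of "{..<K}", simplified])
  also have "\<dots> = (\<Sum>j\<le>K. real (K choose j) * h j)"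
  proof (intro sum.cong refl)
    fix j
    have "{s\<in>Pow {..<K}. card s = j} = {s. s \<subseteq> {..<K} \<and> card s = j}"
      by auto
    then have "card {s\<in>Pow {..<K}. card s = j} = K choose j"
      using n_subsets[of "{..<K}" j] by simp
    then show "(\<Sum>s\<in>{s\<in>Pow {..<K}. card s = j}. h (card s)) = real (K choose j) * h j"
      by simp
  qed
  also have "\<dots> = (\<Sum>j\<le>K. of_bool (j \<in> A) * pmf (binomial_pmf K q) j)"
    unfolding h_def using q by (intro sum.cong refl) (simp add: mult_ac)
  also have "\<dots> = sum (pmf (binomial_pmf K q)) ({..K} \<inter> A)"
    by (simp add: sum.inter_restrict of_bool_def if_distrib if_distribR cong: if_cong)
  also have "\<dots> = measure_pmf.prob (binomial_pmf K q) (A \<inter> {..K})"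
    by (simp add: measure_measure_pmf_finite Int_commute)
  also have "\<dots> = measure_pmf.prob (binomial_pmf K q) A"
  proof -
    have "set_pmf (binomial_pmf K q) \<subseteq> {..K}"
      using q by (auto simp: set_pmf_binomial_eq)
    then have "A \<inter> {..K} \<inter> set_pmf (binomial_pmf K q) = A \<inter> set_pmf (binomial_pmf K q)"
      by auto
    then show ?thesis
      by (metis measure_Int_set_pmf)
  qed
  finally show ?thesis .
qed

lemma exp_minus_two_le: "exp (-2 :: real) \<le> 1 / 3"
proof -
  have "3 \<le> exp (2 :: real)" using exp_ge_add_one_self[of 2] by simp
  then show ?thesis by (simp add: exp_minus field_simps)
qed

lemma binomial_threshold_above:
  assumes q: "0 \<le> q" "q \<le> 1" and K: "1 \<le> real K * \<delta>\<^sup>2" and \<delta>: "0 \<le> \<delta>"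
    and gap: "q + \<delta> \<le> \<theta>"
  shows "2 / 3 \<le> measure_pmf.prob (binomial_pmf K q) {j. real j \<le> real K * \<theta>}"
proof -
  have K0: "K > 0" using K by (cases K) auto
  have bd: "binomial_distribution q" by unfold_locales (use q in auto)
  have "real K * (q + \<delta>) \<le> real K * \<theta>"
    using gap by (intro mult_left_mono) auto
  then have "UNIV - {j. real j \<le> real K * \<theta>} \<subseteq> {j. real j / real K \<ge> q + \<delta>}"
    using K0 by (auto simp: field_simps)
  then have "measure_pmf.prob (binomial_pmf K q) (UNIV - {j. real j \<le> real K * \<theta>})
      \<le> measure_pmf.prob (binomial_pmf K q) {j. real j / real K \<ge> q + \<delta>}"
    by (rule measure_pmf.finite_measure_mono) simp
  also have "\<dots> \<le> exp (-2 * real K * \<delta>\<^sup>2)"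
    using binomial_distribution.prob_ge'[OF bd K0 \<delta>] by simp
  also have "\<dots> \<le> exp (-2)"
    using K by simp
  finally show ?thesis
    using exp_minus_two_le measure_pmf.prob_compl[of "{j. real j \<le> real K * \<theta>}" "binomial_pmf K q"]
    by simp
qed

lemma binomial_threshold_below:
  assumes q: "0 \<le> q" "q \<le> 1" and K: "1 \<le> real K * \<delta>\<^sup>2" and \<delta>: "0 \<le> \<delta>"
    and gap: "\<theta> + \<delta> \<le> q"
  shows "measure_pmf.prob (binomial_pmf K q) {j. real j \<le> real K * \<theta>} \<le> 1 / 3"
proof -
  have K0: "K > 0" using K by (cases K) auto
  have bd: "binomial_distribution q" by unfold_locales (use q in auto)
  have "real K * \<theta> \<le> real K * (q - \<delta>)"
    using gap by (intro mult_left_mono) auto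
  then have "{j. real j \<le> real K * \<theta>} \<subseteq> {j. real j / real K \<le> q - \<delta>}"
    using K0 by (auto simp: field_simps)
  then have "measure_pmf.prob (binomial_pmf K q) {j. real j \<le> real K * \<theta>}
      \<le> measure_pmf.prob (binomial_pmf K q) {j. real j / real K \<le> q - \<delta>}"
    by (rule measure_pmf.finite_measure_mono) simp
  also have "\<dots> \<le> exp (-2 * real K * \<delta>\<^sup>2)"
    using binomial_distribution.prob_le'[OF bd K0 \<delta>] by simp
  also have "\<dots> \<le> exp (-2)"
    using K by simp
  finally show ?thesis
    using exp_minus_two_le by simp
qed

lemma inner_sq_le_one:
  fixes a b :: "nat \<Rightarrow> real"
  assumes "(\<Sum>i<D. (a i)\<^sup>2) = 1" "(\<Sum>i<D. (b i)\<^sup>2) = 1"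
  shows "(\<Sum>i<D. a i * b i)\<^sup>2 \<le> 1"
  using Cauchy_Schwarz_ineq_sum[of a b "{..<D}"] assms by simp

text \<open>Each player sends \<open>K\<close> copies of a pure state; the referee runs a swap test on each of
  the \<open>K\<close> pairs of corresponding copies and accepts iff at most \<open>\<tau>\<close> of them reject. A swap test
  on states with overlap \<open>t\<close> rejects with probability \<open>(1 - t\<^sup>2) / 2\<close>.\<close>

lemma qsmp_protocol_swap_tests:
  fixes a b :: "bool list \<Rightarrow> nat \<Rightarrow> real"
  assumes a: "\<And>x. length x = n \<Longrightarrow> (\<Sum>i<2 ^ p. (a x i)\<^sup>2) = 1"
    and b: "\<And>y. length y = n \<Longrightarrow> (\<Sum>i<2 ^ p. (b y i)\<^sup>2) = 1"
    and acc: "\<And>x y. length x = n \<Longrightarrow> length y = n \<Longrightarrow>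
      (let P = measure_pmf.prob (binomial_pmf K ((1 - (\<Sum>i<2 ^ p. a x i * b y i)\<^sup>2) / 2)) {j. real j \<le> \<tau>}
       in if f x y then 2 / 3 \<le> P else 2 / 3 \<le> 1 - P)"
  shows "qsmp_protocol n f (K * p) (K * p)"
proof -
  define lam :: "nat set \<Rightarrow> real" where "lam s = of_bool (real (card s) \<le> \<tau>)" for s
  obtain M where M: "effect ((2 ^ p) ^ K * (2 ^ p) ^ K) M"
    and acc_M: "\<And>a b. (\<Sum>i<2 ^ p. (a i)\<^sup>2) = 1 \<Longrightarrow> (\<Sum>i<2 ^ p. (b i)\<^sup>2) = 1 \<Longrightarrow>
       Re (mtrace (M * kron (pure_state ((2 ^ p) ^ K) (tensor_power (2 ^ p) K a))
                            (pure_state ((2 ^ p) ^ K) (tensor_power (2 ^ p) K b))))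
       = (\<Sum>s\<in>Pow {..<K}. lam s * ((1 - (\<Sum>i<2 ^ p. a i * b i)\<^sup>2) / 2) ^ card s
                              * ((1 + (\<Sum>i<2 ^ p. a i * b i)\<^sup>2) / 2) ^ (K - card s))"
    using swap_tests_povm[of "2 ^ p" K lam] by (auto simp: lam_def)
  have dim: "(2::nat) ^ (K * p) = (2 ^ p) ^ K"
    by (metis power_mult mult.commute)
  show ?thesis
    unfolding qsmp_protocol_def
  proof (intro exI conjI allI impI)
    show "density (2 ^ (K * p)) (pure_state ((2 ^ p) ^ K) (tensor_power (2 ^ p) K (a x)))"
      if "length x = n" for x
      unfolding dim using a[OF that] by (intro density_pure_state) (simp add: sum_tensor_power_square)
    show "density (2 ^ (K * p)) (pure_state ((2 ^ p) ^ K) (tensor_power (2 ^ p) K (b y)))"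
      if "length y = n" for y
      unfolding dim using b[OF that] by (intro density_pure_state) (simp add: sum_tensor_power_square)
    show "effect (2 ^ (K * p + K * p)) M"
      using M by (simp add: power_add dim)
    fix x y :: "bool list" assume x: "length x = n" and y: "length y = n"
    define t where "t = (\<Sum>i<2 ^ p. a x i * b y i)"
    have "t\<^sup>2 \<le> 1"
      unfolding t_def by (rule inner_sq_le_one[OF a[OF x] b[OF y]])
    then have t: "0 \<le> (1 - t\<^sup>2) / 2" "(1 - t\<^sup>2) / 2 \<le> 1"
      by (auto intro: order_trans[OF _ zero_le_power2])
    have "Re (mtrace (M * kron (pure_state ((2 ^ p) ^ K) (tensor_power (2 ^ p) K (a x)))
                              (pure_state ((2 ^ p) ^ K) (tensor_power (2 ^ p) K (b y)))))
        = measure_pmf.prob (binomial_pmf K ((1 - t\<^sup>2) / 2)) {j. real j \<le> \<tau>}"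
      unfolding acc_M[OF a[OF x] b[OF y]] t_def[symmetric] sum_Pow_binomial[OF t, symmetric]
      by (intro sum.cong refl) (simp add: lam_def field_simps)
    then show "let P = Re (mtrace (M * kron (pure_state ((2 ^ p) ^ K) (tensor_power (2 ^ p) K (a x)))
                              (pure_state ((2 ^ p) ^ K) (tensor_power (2 ^ p) K (b y)))))
      in if f x y then 2 / 3 \<le> P else 2 / 3 \<le> 1 - P"
      using acc[OF x y] by (simp add: t_def)
  qed
qed

text \<open>\<open>lift_vec u\<close> is \<open>(e\<^sub>0 + u) / \<surd>2\<close> in \<open>\<real>\<^sup>2 \<otimes> \<real>\<^sup>D\<close>, with \<open>e\<^sub>0\<close> in the even and \<open>u\<close> in the
  odd coordinates. The swap test only sees squared overlaps; lifting makes the overlap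
  \<open>(1 + \<langle>u, v\<rangle>) / 2\<close> nonnegative, so that its square is monotone in \<open>\<langle>u, v\<rangle>\<close>.\<close>

definition lift_vec :: "(nat \<Rightarrow> real) \<Rightarrow> nat \<Rightarrow> real" where
  "lift_vec u k = (if even k then of_bool (k = 0) else u (k div 2)) / sqrt 2"

lemma sum_lift_vec_mult:
  "(\<Sum>k<2 ^ Suc q. lift_vec u k * lift_vec v k) = (1 + (\<Sum>i<2 ^ q. u i * v i)) / 2"
proof -
  have "(\<Sum>k<2 ^ Suc q. lift_vec u k * lift_vec v k)
      = (\<Sum>i<2 ^ q. lift_vec u (i * 2) * lift_vec v (i * 2) + lift_vec u (Suc (i * 2)) * lift_vec v (Suc (i * 2)))"
    unfolding power_Suc2 sum_mult_product by (simp add: numeral_2_eq_2)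
  also have "\<dots> = (\<Sum>i<2 ^ q. of_bool (i = 0) / 2 + u i * v i / 2)"
    by (intro sum.cong refl) (auto simp: lift_vec_def)
  also have "\<dots> = (1 + (\<Sum>i<2 ^ q. u i * v i)) / 2"
    by (simp add: sum.distrib sum_divide_distrib[symmetric] of_bool_def)
  finally show ?thesis .
qed

text \<open>\<open>r\<close> is the rejection probability of a swap test on states with overlap \<open>(1 + w) / 2\<close>.\<close>

lemma swap_rejection_gap:
  fixes w \<epsilon> :: real
  assumes w: "w\<^sup>2 \<le> 1" and \<epsilon>: "0 \<le> \<epsilon>"
  defines "r \<equiv> (1 - ((1 + w) / 2)\<^sup>2) / 2"
  shows "0 \<le> r" "r \<le> 1"
    and "\<epsilon> \<le> w \<Longrightarrow> r + \<epsilon> / 4 \<le> (3 - \<epsilon>\<^sup>2) / 8"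
    and "w \<le> - \<epsilon> \<Longrightarrow> (3 - \<epsilon>\<^sup>2) / 8 + \<epsilon> / 4 \<le> r"
proof -
  have w_bounds: "-1 \<le> w" "w \<le> 1"
    using w abs_le_square_iff[of w 1] by auto
  then show "0 \<le> r" "r \<le> 1"
    unfolding r_def using w by (auto simp: power2_eq_square field_simps)
  show "r + \<epsilon> / 4 \<le> (3 - \<epsilon>\<^sup>2) / 8" if "\<epsilon> \<le> w"
  proof -
    have "((1 + \<epsilon>) / 2)\<^sup>2 \<le> ((1 + w) / 2)\<^sup>2"
      using that \<epsilon> by (intro power_mono) auto
    then show ?thesis
      unfolding r_def by (simp add: power2_eq_square field_simps)
  qed
  show "(3 - \<epsilon>\<^sup>2) / 8 + \<epsilon> / 4 \<le> r" if "w \<le> - \<epsilon>"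
  proof -
    have "((1 + w) / 2)\<^sup>2 \<le> ((1 - \<epsilon>) / 2)\<^sup>2"
      using that w_bounds by (intro power_mono) auto
    then show ?thesis
      unfolding r_def by (simp add: power2_eq_square field_simps)
  qed
qed

lemma qsmp_protocol_of_inner_product_gap:
  fixes u v :: "bool list \<Rightarrow> nat \<Rightarrow> real"
  assumes u: "\<And>x. length x = n \<Longrightarrow> (\<Sum>i<2 ^ q. (u x i)\<^sup>2) = 1"
    and v: "\<And>y. length y = n \<Longrightarrow> (\<Sum>i<2 ^ q. (v y i)\<^sup>2) = 1"
    and \<epsilon>: "\<epsilon> > 0"
    and yes: "\<And>x y. length x = n \<Longrightarrow> length y = n \<Longrightarrow> f x y \<Longrightarrow> \<epsilon> \<le> (\<Sum>i<2 ^ q. u x i * v y i)"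
    and no: "\<And>x y. length x = n \<Longrightarrow> length y = n \<Longrightarrow> \<not> f x y \<Longrightarrow> (\<Sum>i<2 ^ q. u x i * v y i) \<le> - \<epsilon>"
    and K: "16 \<le> real K * \<epsilon>\<^sup>2"
  shows "qsmp_protocol n f (K * Suc q) (K * Suc q)"
proof (rule qsmp_protocol_swap_tests[where a = "\<lambda>x. lift_vec (u x)" and b = "\<lambda>y. lift_vec (v y)"
      and \<tau> = "real K * ((3 - \<epsilon>\<^sup>2) / 8)"])
  show "(\<Sum>i<2 ^ Suc q. (lift_vec (u x) i)\<^sup>2) = 1" if "length x = n" for x
    using sum_lift_vec_mult[where q = q and u = "u x" and v = "u x"] u[OF that] by (simp add: power2_eq_square)
  show "(\<Sum>i<2 ^ Suc q. (lift_vec (v y) i)\<^sup>2) = 1" if "length y = n" for y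
    using sum_lift_vec_mult[where q = q and u = "v y" and v = "v y"] v[OF that] by (simp add: power2_eq_square)
  fix x y :: "bool list" assume x: "length x = n" and y: "length y = n"
  define w where "w = (\<Sum>i<2 ^ q. u x i * v y i)"
  define r where "r = (1 - ((1 + w) / 2)\<^sup>2) / 2"
  have w: "w\<^sup>2 \<le> 1"
    unfolding w_def by (rule inner_sq_le_one[OF u[OF x] v[OF y]])
  note gap = swap_rejection_gap[OF w less_imp_le[OF \<epsilon>], folded r_def]
  have K\<delta>: "1 \<le> real K * (\<epsilon> / 4)\<^sup>2"
    using K by (simp add: power_divide)
  have \<delta>: "0 \<le> \<epsilon> / 4"
    using \<epsilon> by simp
  have "(1 - (\<Sum>i<2 ^ Suc q. lift_vec (u x) i * lift_vec (v y) i)\<^sup>2) / 2 = r"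
    by (simp only: sum_lift_vec_mult r_def w_def)
  moreover have "2 / 3 \<le> measure_pmf.prob (binomial_pmf K r) {j. real j \<le> real K * ((3 - \<epsilon>\<^sup>2) / 8)}"
    if "f x y"
    using binomial_threshold_above[OF gap(1,2) K\<delta> \<delta> gap(3)] yes[OF x y that] by (simp add: w_def)
  moreover have "measure_pmf.prob (binomial_pmf K r) {j. real j \<le> real K * ((3 - \<epsilon>\<^sup>2) / 8)} \<le> 1 / 3"
    if "\<not> f x y"
    using binomial_threshold_below[OF gap(1,2) K\<delta> \<delta> gap(4)] no[OF x y that] by (simp add: w_def)
  ultimately show "let P = measure_pmf.prob (binomial_pmf K ((1 - (\<Sum>i<2 ^ Suc q. lift_vec (u x) i * lift_vec (v y) i)\<^sup>2) / 2))
                    {j. real j \<le> real K * ((3 - \<epsilon>\<^sup>2) / 8)}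
       in if f x y then 2 / 3 \<le> P else 2 / 3 \<le> 1 - P"
    by (simp add: Let_def)
qed

section \<open>Newman's derandomization\<close>

lemma map_pmf_mem_eq_bernoulli:
  "map_pmf (\<lambda>z. z \<in> E) P = bernoulli_pmf (measure_pmf.prob P E)"
proof (rule pmf_eqI)
  fix b :: bool
  have "(\<lambda>z. z \<in> E) -` {True} = E" "(\<lambda>z. z \<in> E) -` {False} = UNIV - E"
    by auto
  then show "pmf (map_pmf (\<lambda>z. z \<in> E) P) b = pmf (bernoulli_pmf (measure_pmf.prob P E)) b"
    using measure_pmf.prob_compl[of E P] by (cases b) (simp_all add: pmf_map)
qed

lemma map_pmf_card_Pi_pmf:
  "map_pmf (\<lambda>g. card {i\<in>{..<N}. g i \<in> E}) (Pi_pmf {..<N} d (\<lambda>_. P))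
     = binomial_pmf N (measure_pmf.prob P E)"
proof -
  have "map_pmf (\<lambda>g. card {i\<in>{..<N}. g i \<in> E}) (Pi_pmf {..<N} d (\<lambda>_. P))
      = map_pmf (\<lambda>h. card {i\<in>{..<N}. h i}) (map_pmf ((\<circ>) (\<lambda>z. z \<in> E)) (Pi_pmf {..<N} d (\<lambda>_. P)))"
    by (simp add: pmf.map_comp o_def)
  also have "map_pmf ((\<circ>) (\<lambda>z. z \<in> E)) (Pi_pmf {..<N} d (\<lambda>_. P))
      = Pi_pmf {..<N} (d \<in> E) (\<lambda>_. bernoulli_pmf (measure_pmf.prob P E))"
    by (simp add: Pi_pmf_map[symmetric] map_pmf_mem_eq_bernoulli)
  also have "map_pmf (\<lambda>h. card {i\<in>{..<N}. h i}) \<dots> = binomial_pmf N (measure_pmf.prob P E)"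
    by (rule binomial_pmf_altdef'[symmetric]) auto
  finally show ?thesis .
qed

lemma exists_sample_majority:
  fixes Q :: "'a pmf" and G :: "'p \<Rightarrow> 'a set"
  assumes N: "N > 0" and fin: "finite Ps"
    and good: "\<And>p. p \<in> Ps \<Longrightarrow> 2 / 3 \<le> measure_pmf.prob Q (G p)"
    and small: "real (card Ps) * exp (- real N / 72) < 1"
  shows "\<exists>T. (\<forall>i<N. T i \<in> set_pmf Q) \<and>
           (\<forall>p\<in>Ps. 7 / 12 * real N < real (card {i\<in>{..<N}. T i \<in> G p}))"
proof -
  define M where "M = Pi_pmf {..<N} undefined (\<lambda>_. Q)"
  define B where "B p = {T. real (card {i\<in>{..<N}. T i \<in> G p}) / real N \<le> measure_pmf.prob Q (G p) - 1 / 12}"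
    for p
  have bd: "binomial_distribution (measure_pmf.prob Q (G p))" for p
    by unfold_locales auto
  have "measure_pmf.prob M (B p) \<le> exp (- real N / 72)" for p
  proof -
    have "measure_pmf.prob M (B p)
        = measure_pmf.prob (binomial_pmf N (measure_pmf.prob Q (G p)))
            {j. real j / real N \<le> measure_pmf.prob Q (G p) - 1 / 12}"
      unfolding M_def B_def map_pmf_card_Pi_pmf[where d = undefined, symmetric] by (simp add: vimage_def)
    also have "\<dots> \<le> exp (- real N / 72)"
      using binomial_distribution.prob_le'[OF bd N, of "1 / 12"] by (simp add: power2_eq_square)
    finally show ?thesis .
  qed
  then have "measure_pmf.prob M (\<Union>p\<in>Ps. B p) \<le> real (card Ps) * exp (- real N / 72)"
    using measure_pmf.finite_measure_subadditive_finite[of Ps B M] fin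
      sum_mono[of Ps "\<lambda>p. measure_pmf.prob M (B p)" "\<lambda>_. exp (- real N / 72)"]
    by auto
  then have "measure_pmf.prob M (UNIV - (\<Union>p\<in>Ps. B p)) \<noteq> 0"
    using small measure_pmf.prob_compl[of "\<Union>p\<in>Ps. B p" M] by simp
  then obtain T where T: "T \<in> set_pmf M" "\<And>p. p \<in> Ps \<Longrightarrow> T \<notin> B p"
    by (auto simp: measure_pmf_zero_iff)
  have "7 / 12 * real N < real (card {i\<in>{..<N}. T i \<in> G p})" if "p \<in> Ps" for p
  proof -
    have "real N * (measure_pmf.prob Q (G p) - 1 / 12) < real (card {i\<in>{..<N}. T i \<in> G p})"
      using T(2)[OF that] N by (simp add: B_def field_simps)
    moreover have "real N * (2 / 3) \<le> real N * measure_pmf.prob Q (G p)"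
      using good[OF that] by (intro mult_left_mono) auto
    ultimately show ?thesis
      by (simp add: algebra_simps)
  qed
  moreover have "T i \<in> set_pmf Q" if "i < N" for i
    using T(1) that by (auto simp: M_def set_Pi_pmf PiE_dflt_def)
  ultimately show ?thesis
    by blast
qed

section \<open>From one-way protocols to quantum SMP protocols\<close>

lemma finite_bool_lists: "finite {x :: bool list. length x = n}"
  using finite_lists_length_eq[of "UNIV :: bool set" n] by simp

lemma card_bool_lists: "card {x :: bool list. length x = n} = 2 ^ n"
  using card_lists_length_eq[of "UNIV :: bool set" n] by simp

lemma four_pow_exp_lt_one:
  assumes "144 * n < N"
  shows "(4::real) ^ n * exp (- real N / 72) < 1"
proof -
  have "(4::real) \<le> exp 2"
    using exp_ge_add_one_self[of 1] mult_mono[of 2 "exp 1" 2 "exp (1::real)"]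
    by (simp add: exp_add[symmetric])
  then have "(4::real) ^ n \<le> exp (2 * real n)"
    by (metis exp_of_nat_mult mult.commute power_mono zero_le_numeral)
  also have "\<dots> < exp (real N / 72)"
    using assms by simp
  finally show ?thesis
    by (simp add: exp_minus field_simps)
qed

lemma oneway_pub_protocol_samples:
  fixes f :: "bool list \<Rightarrow> bool list \<Rightarrow> bool"
  assumes P: "oneway_pub_protocol n f c" and N: "144 * n < N"
  shows "\<exists>T :: nat \<Rightarrow> (bool list \<Rightarrow> bool list) \<times> (bool list \<Rightarrow> bool list \<Rightarrow> bool).
    (\<forall>i<N. \<forall>x. length x = n \<longrightarrow> length (fst (T i) x) = c) \<and>
    (\<forall>x y. length x = n \<longrightarrow> length y = n \<longrightarrow>
       7 / 12 * real N < real (card {i\<in>{..<N}. snd (T i) y (fst (T i) x) = f x y}))"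
proof -
  obtain P :: "((bool list \<Rightarrow> bool list) \<times> (bool list \<Rightarrow> bool list \<Rightarrow> bool)) pmf"
    where len: "\<And>ab x. ab \<in> set_pmf P \<Longrightarrow> length x = n \<Longrightarrow> length (fst ab x) = c"
      and ok: "\<And>x y. length x = n \<Longrightarrow> length y = n \<Longrightarrow> 2 / 3 \<le> measure_pmf.prob P {(a, b). b y (a x) = f x y}"
    using P unfolding oneway_pub_protocol_def by blast
  define Ps where "Ps = {x :: bool list. length x = n} \<times> {y :: bool list. length y = n}"
  define G :: "bool list \<times> bool list \<Rightarrow> ((bool list \<Rightarrow> bool list) \<times> (bool list \<Rightarrow> bool list \<Rightarrow> bool)) set"
    where "G p = {(a, b). b (snd p) (a (fst p)) = f (fst p) (snd p)}" for p
  have fin: "finite Ps" and card: "card Ps = 4 ^ n"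
    unfolding Ps_def
    by (simp_all add: finite_bool_lists card_bool_lists card_cartesian_product power_mult_distrib[symmetric])
  have good: "2 / 3 \<le> measure_pmf.prob P (G p)" if p: "p \<in> Ps" for p
  proof -
    obtain x y where "p = (x, y)" "length x = n" "length y = n"
      using p unfolding Ps_def by blast
    then show ?thesis using ok[of x y] by (simp add: G_def)
  qed
  have "\<exists>T. (\<forall>i<N. T i \<in> set_pmf P) \<and>
      (\<forall>p\<in>Ps. 7 / 12 * real N < real (card {i\<in>{..<N}. T i \<in> G p}))"
    by (rule exists_sample_majority[OF _ fin good])
      (use N four_pow_exp_lt_one[OF N] in \<open>simp_all add: card\<close>)
  then obtain T where T_P: "\<And>i. i < N \<Longrightarrow> T i \<in> set_pmf P"
    and maj: "\<And>p. p \<in> Ps \<Longrightarrow> 7 / 12 * real N < real (card {i\<in>{..<N}. T i \<in> G p})"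
    by blast
  have G_iff: "T i \<in> G (x, y) \<longleftrightarrow> snd (T i) y (fst (T i) x) = f x y" for i x y
    by (cases "T i") (simp add: G_def)
  show ?thesis
  proof (intro exI[of _ T] conjI allI impI)
    show "length (fst (T i) x) = c" if "i < N" "length x = n" for i x
      using len[OF T_P] that by blast
    show "7 / 12 * real N < real (card {i\<in>{..<N}. snd (T i) y (fst (T i) x) = f x y})"
      if "length x = n" "length y = n" for x y
      using maj[of "(x, y)"] that by (simp add: Ps_def G_iff)
  qed
qed

text \<open>For samples \<open>T\<close> of a protocol with \<open>c\<close>-bit messages, Alice's vector marks her message
  in each sample and Bob's vector carries his answer to every possible message as a sign.\<close>

definition msg_vec ::
  "(nat \<Rightarrow> (bool list \<Rightarrow> bool list) \<times> (bool list \<Rightarrow> bool list \<Rightarrow> bool)) \<Rightarrow> nat \<Rightarrow> bool list \<Rightarrow> nat \<times> bool list \<Rightarrow> real"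
  where "msg_vec T N x z = of_bool (snd z = fst (T (fst z)) x) / sqrt N"

definition answer_vec ::
  "(nat \<Rightarrow> (bool list \<Rightarrow> bool list) \<times> (bool list \<Rightarrow> bool list \<Rightarrow> bool)) \<Rightarrow> nat \<Rightarrow> nat \<Rightarrow> bool list \<Rightarrow> nat \<times> bool list \<Rightarrow> real"
  where "answer_vec T N c y z = (if snd (T (fst z)) y (snd z) then 1 else -1) / sqrt (N * 2 ^ c)"

lemma sum_msg_vec_square:
  assumes "N > 0" "\<And>i. i < N \<Longrightarrow> length (fst (T i) x) = c"
  shows "(\<Sum>z\<in>{..<N} \<times> {m. length m = c}. (msg_vec T N x z)\<^sup>2) = 1"
proof -
  have "(\<Sum>z\<in>{..<N} \<times> {m. length m = c}. (msg_vec T N x z)\<^sup>2)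
      = (\<Sum>i<N. \<Sum>m\<in>{m. length m = c}. if m = fst (T i) x then 1 / N else 0)"
    unfolding sum.cartesian_product by (intro sum.cong refl) (auto simp: msg_vec_def power_divide)
  also have "\<dots> = 1"
    using assms by (simp add: finite_bool_lists)
  finally show ?thesis .
qed

lemma sum_answer_vec_square:
  assumes "N > 0"
  shows "(\<Sum>z\<in>{..<N} \<times> {m. length m = c}. (answer_vec T N c y z)\<^sup>2) = 1"
proof -
  have "(if b then 1 else -1 :: real)\<^sup>2 = 1" for b
    by (cases b) simp_all
  then show ?thesis
    using assms by (simp add: answer_vec_def power_divide card_cartesian_product card_bool_lists)
qed

lemma sum_msg_vec_answer_vec:
  assumes "\<And>i. i < N \<Longrightarrow> length (fst (T i) x) = c"
  shows "(\<Sum>z\<in>{..<N} \<times> {m. length m = c}. msg_vec T N x z * answer_vec T N c y z)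
       = (\<Sum>i<N. if snd (T i) y (fst (T i) x) then 1 else -1) / (N * sqrt (2 ^ c))"
proof -
  have "(\<Sum>z\<in>{..<N} \<times> {m. length m = c}. msg_vec T N x z * answer_vec T N c y z)
      = (\<Sum>i<N. \<Sum>m\<in>{m. length m = c}. if m = fst (T i) x
          then (if snd (T i) y (fst (T i) x) then 1 else -1) / (N * sqrt (2 ^ c)) else 0)"
    unfolding sum.cartesian_product
    by (intro sum.cong refl) (auto simp: msg_vec_def answer_vec_def real_sqrt_mult)
  also have "\<dots> = (\<Sum>i<N. if snd (T i) y (fst (T i) x) then 1 else -1) / (N * sqrt (2 ^ c))"
    using assms by (simp add: finite_bool_lists sum_divide_distrib)
  finally show ?thesis .
qed

lemma exists_vectors_of_samples:
  fixes T :: "nat \<Rightarrow> (bool list \<Rightarrow> bool list) \<times> (bool list \<Rightarrow> bool list \<Rightarrow> bool)"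
  assumes len: "\<And>i x. i < 2 ^ L \<Longrightarrow> length x = n \<Longrightarrow> length (fst (T i) x) = c"
  shows "\<exists>u v. (\<forall>x. length x = n \<longrightarrow> (\<Sum>k<(2::nat) ^ (L + c). (u x k)\<^sup>2) = 1)
    \<and> (\<forall>y. (\<Sum>k<(2::nat) ^ (L + c). (v y k)\<^sup>2) = 1)
    \<and> (\<forall>x y. length x = n \<longrightarrow> (\<Sum>k<2 ^ (L + c). u x k * v y k)
          = (\<Sum>i<2 ^ L. if snd (T i) y (fst (T i) x) then 1 else -1) / (2 ^ L * sqrt (2 ^ c)))"
proof -
  let ?S = "{..<(2::nat) ^ L} \<times> {m :: bool list. length m = c}"
  have "finite ?S" "card ?S = 2 ^ (L + c)"
    by (simp_all add: finite_bool_lists card_cartesian_product card_bool_lists power_add)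
  then obtain g where g: "bij_betw g {..<(2::nat) ^ (L + c)} ?S"
    using ex_bij_betw_nat_finite by (metis atLeast0LessThan)
  have reindex: "(\<Sum>k<2 ^ (L + c). F (g k)) = (\<Sum>z\<in>?S. F z)" for F :: "_ \<Rightarrow> real"
    by (rule sum.reindex_bij_betw[OF g])
  define u where "u x k = msg_vec T (2 ^ L) x (g k)" for x k
  define v where "v y k = answer_vec T (2 ^ L) c y (g k)" for y k
  have "(\<Sum>k<2 ^ (L + c). (u x k)\<^sup>2) = 1" if "length x = n" for x
    unfolding u_def reindex[of "\<lambda>z. (msg_vec T (2 ^ L) x z)\<^sup>2", simplified]
    using that by (intro sum_msg_vec_square) (simp_all add: len)
  moreover have "(\<Sum>k<2 ^ (L + c). (v y k)\<^sup>2) = 1" for y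
    unfolding v_def reindex[of "\<lambda>z. (answer_vec T (2 ^ L) c y z)\<^sup>2", simplified]
    by (intro sum_answer_vec_square) simp
  moreover have "(\<Sum>k<2 ^ (L + c). u x k * v y k)
      = (\<Sum>i<2 ^ L. if snd (T i) y (fst (T i) x) then 1 else -1) / (2 ^ L * sqrt (2 ^ c))"
    if "length x = n" for x y
    unfolding u_def v_def reindex[of "\<lambda>z. msg_vec T (2 ^ L) x z * answer_vec T (2 ^ L) c y z", simplified]
    using that len by (subst sum_msg_vec_answer_vec) simp_all
  ultimately show ?thesis
    by blast
qed

lemma sum_sign_eq:
  "(\<Sum>i<N. if P i then 1 else -1 :: real) = 2 * real (card {i\<in>{..<N}. P i}) - real N"
proof -
  have "(\<Sum>i<N. if P i then 1 else -1 :: real) = (\<Sum>i<N. 2 * of_bool (P i) - 1)"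
    by (intro sum.cong) auto
  also have "\<dots> = 2 * real (card {i\<in>{..<N}. P i}) - real N"
    by (simp add: sum_subtractf sum_distrib_left[symmetric] of_bool_def sum.inter_filter[symmetric])
  finally show ?thesis .
qed

lemma sum_sign_majority:
  assumes "7 / 12 * real N < real (card {i\<in>{..<N}. P i = b})"
  shows "if b then real N / 6 \<le> (\<Sum>i<N. if P i then 1 else -1 :: real)
         else (\<Sum>i<N. if P i then 1 else -1 :: real) \<le> - (real N / 6)"
proof (cases b)
  case True
  then show ?thesis
    using assms by (simp add: sum_sign_eq)
next
  case False
  have "(\<Sum>i<N. if P i then 1 else -1 :: real) = (\<Sum>i<N. - (if \<not> P i then 1 else -1))"
    by (intro sum.cong) auto
  also have "\<dots> = - (\<Sum>i<N. if \<not> P i then 1 else -1)"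
    by (rule sum_negf)
  finally show ?thesis
    using assms False by (simp add: sum_sign_eq)
qed

lemma inner_product_gap_of_oneway:
  fixes f :: "bool list \<Rightarrow> bool list \<Rightarrow> bool"
  assumes P: "oneway_pub_protocol n f c" and L: "144 * n < 2 ^ L"
  defines "\<epsilon> \<equiv> 1 / (6 * sqrt (2 ^ c))"
  shows "\<exists>u v. (\<forall>x. length x = n \<longrightarrow> (\<Sum>k<(2::nat) ^ (L + c). (u x k)\<^sup>2) = 1)
    \<and> (\<forall>y. length y = n \<longrightarrow> (\<Sum>k<(2::nat) ^ (L + c). (v y k)\<^sup>2) = 1)
    \<and> (\<forall>x y. length x = n \<longrightarrow> length y = n \<longrightarrow>
         (if f x y then \<epsilon> \<le> (\<Sum>k<2 ^ (L + c). u x k * v y k)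
          else (\<Sum>k<2 ^ (L + c). u x k * v y k) \<le> - \<epsilon>))"
proof -
  obtain T :: "nat \<Rightarrow> (bool list \<Rightarrow> bool list) \<times> (bool list \<Rightarrow> bool list \<Rightarrow> bool)"
    where len: "\<And>i x. i < 2 ^ L \<Longrightarrow> length x = n \<Longrightarrow> length (fst (T i) x) = c"
      and maj: "\<And>x y. length x = n \<Longrightarrow> length y = n \<Longrightarrow>
        7 / 12 * real ((2::nat) ^ L) < real (card {i\<in>{..<2 ^ L}. snd (T i) y (fst (T i) x) = f x y})"
    using oneway_pub_protocol_samples[OF P L] by blast
  obtain u v where u: "\<And>x. length x = n \<Longrightarrow> (\<Sum>k<(2::nat) ^ (L + c). (u x k)\<^sup>2) = 1"
    and v: "\<And>y. (\<Sum>k<(2::nat) ^ (L + c). (v y k)\<^sup>2) = 1"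
    and uv: "\<And>x y. length x = n \<Longrightarrow> (\<Sum>k<2 ^ (L + c). u x k * v y k)
          = (\<Sum>i<2 ^ L. if snd (T i) y (fst (T i) x) then 1 else -1) / (2 ^ L * sqrt (2 ^ c))"
    using exists_vectors_of_samples[where L = L and n = n and c = c and T = T, OF len] by blast
  define S where "S x y = (\<Sum>i<2 ^ L. if snd (T i) y (fst (T i) x) then 1 else -1 :: real)" for x y
  have S_gap: "if f x y then 2 ^ L / 6 \<le> S x y else S x y \<le> - (2 ^ L / 6)"
    if x: "length x = n" and y: "length y = n" for x y
    using sum_sign_majority[OF maj[OF x y]] by (cases "f x y") (simp_all add: S_def)
  have "if f x y then \<epsilon> \<le> (\<Sum>k<2 ^ (L + c). u x k * v y k)
          else (\<Sum>k<2 ^ (L + c). u x k * v y k) \<le> - \<epsilon>"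
    if x: "length x = n" and y: "length y = n" for x y
  proof (cases "f x y")
    case True
    have "\<epsilon> = (2 ^ L / 6) / (2 ^ L * sqrt (2 ^ c))"
      unfolding \<epsilon>_def by simp
    also have "\<dots> \<le> S x y / (2 ^ L * sqrt (2 ^ c))"
      using S_gap[OF x y] True by (intro divide_right_mono) simp_all
    finally show ?thesis
      using True by (simp add: uv[OF x] S_def)
  next
    case False
    have "S x y / (2 ^ L * sqrt (2 ^ c)) \<le> - (2 ^ L / 6) / (2 ^ L * sqrt (2 ^ c))"
      using S_gap[OF x y] False by (intro divide_right_mono) simp_all
    also have "\<dots> = - \<epsilon>"
      unfolding \<epsilon>_def by simp
    finally show ?thesis
      using False by (simp add: uv[OF x] S_def)
  qed
  then show ?thesis
    using u v by blast
qed

lemma Qpar_le_oneway: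
  fixes f :: "bool list \<Rightarrow> bool list \<Rightarrow> bool"
  assumes P: "oneway_pub_protocol n f c" and L: "144 * n < 2 ^ L"
  shows "Qpar n f \<le> 1152 * 2 ^ c * Suc (L + c)"
proof -
  define \<epsilon> :: real where "\<epsilon> = 1 / (6 * sqrt (2 ^ c))"
  define K :: nat where "K = 576 * 2 ^ c"
  obtain u v where u: "\<And>x. length x = n \<Longrightarrow> (\<Sum>k<(2::nat) ^ (L + c). (u x k)\<^sup>2) = 1"
    and v: "\<And>y. length y = n \<Longrightarrow> (\<Sum>k<(2::nat) ^ (L + c). (v y k)\<^sup>2) = 1"
    and gap: "\<And>x y. length x = n \<Longrightarrow> length y = n \<Longrightarrow>
         (if f x y then \<epsilon> \<le> (\<Sum>k<2 ^ (L + c). u x k * v y k)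
          else (\<Sum>k<2 ^ (L + c). u x k * v y k) \<le> - \<epsilon>)"
    using inner_product_gap_of_oneway[OF P L] unfolding \<epsilon>_def by blast
  have "qsmp_protocol n f (K * Suc (L + c)) (K * Suc (L + c))"
  proof (rule qsmp_protocol_of_inner_product_gap[OF u v])
    show "0 < \<epsilon>"
      by (simp add: \<epsilon>_def)
    show "16 \<le> real K * \<epsilon>\<^sup>2"
      by (simp add: K_def \<epsilon>_def power_divide)
    show "\<epsilon> \<le> (\<Sum>k<2 ^ (L + c). u x k * v y k)" if "length x = n" "length y = n" "f x y" for x y
      using gap[OF that(1,2)] that(3) by simp
    show "(\<Sum>k<2 ^ (L + c). u x k * v y k) \<le> - \<epsilon>" if "length x = n" "length y = n" "\<not> f x y" for x y
      using gap[OF that(1,2)] that(3) by simp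
  qed
  then have "Qpar n f \<le> K * Suc (L + c) + K * Suc (L + c)"
    unfolding Qpar_def by (intro Least_le) blast
  then show ?thesis
    by (simp add: K_def algebra_simps)
qed

lemma oneway_pub_protocol_R1pub: "oneway_pub_protocol n f (R1pub n f)"
  unfolding R1pub_def
proof (rule LeastI)
  show "oneway_pub_protocol n f n"
    unfolding oneway_pub_protocol_def
    by (intro exI[of _ "return_pmf (\<lambda>x. x, \<lambda>y x. f x y)"]) (simp add: measure_return)
qed

lemma le_two_pow_ceiling_log:
  assumes "n > 0"
  shows "real n \<le> 2 ^ nat \<lceil>log 2 n\<rceil>"
proof -
  have "real n = 2 powr (log 2 n)"
    using assms by simp
  also have "\<dots> \<le> 2 powr (nat \<lceil>log 2 n\<rceil>)"
    by (intro powr_mono) linarith+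
  also have "\<dots> = 2 ^ nat \<lceil>log 2 n\<rceil>"
    by (simp add: powr_realpow)
  finally show ?thesis .
qed

lemma Qpar_le_log:
  fixes f :: "bool list \<Rightarrow> bool list \<Rightarrow> bool"
  assumes n: "n \<ge> 2"
  shows "real (Qpar n f) \<le> 12672 * 2 ^ (2 * R1pub n f) * log 2 n"
proof -
  define c where "c = R1pub n f"
  define L where "L = nat \<lceil>log 2 n\<rceil> + 8"
  have log: "1 \<le> log 2 n"
    using n by (subst le_log_iff) auto
  have "144 * n < 2 ^ L"
    using le_two_pow_ceiling_log[of n] n by (simp add: L_def power_add)
  then have "Qpar n f \<le> 1152 * 2 ^ c * Suc (L + c)"
    unfolding c_def by (rule Qpar_le_oneway[OF oneway_pub_protocol_R1pub])
  then have "real (Qpar n f) \<le> real (1152 * 2 ^ c * Suc (L + c))"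
    by (simp only: of_nat_le_iff)
  also have "\<dots> = 1152 * 2 ^ c * (real L + real c + 1)"
    by (simp add: algebra_simps)
  also have "\<dots> \<le> 1152 * 2 ^ c * (11 * 2 ^ c * log 2 n)"
  proof (intro mult_left_mono)
    have "Suc c \<le> 2 ^ c"
      using less_exp[of c] by (simp add: Suc_le_eq)
    then have "real (Suc c) \<le> real ((2::nat) ^ c)"
      by (simp only: of_nat_le_iff)
    then have "real c + 1 \<le> 2 ^ c"
      by simp
    moreover have "real L \<le> log 2 n + 9"
      unfolding L_def using log by linarith
    ultimately have "real L + real c + 1 \<le> log 2 n + (9 + 2 ^ c) * 1"
      by simp
    also have "\<dots> \<le> log 2 n + (9 + 2 ^ c) * log 2 n"
      using log by (intro add_left_mono mult_left_mono) auto
    also have "\<dots> = (10 + 2 ^ c) * log 2 n"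
      by (simp add: algebra_simps)
    also have "\<dots> \<le> 11 * 2 ^ c * log 2 n"
      using log by (intro mult_right_mono) auto
    finally show "real L + real c + 1 \<le> 11 * 2 ^ c * log 2 n" .
  qed simp
  also have "1152 * 2 ^ c * (11 * 2 ^ c * log 2 n) = 12672 * 2 ^ (2 * c) * log 2 n"
    by (simp add: mult_2 power_add)
  finally show ?thesis
    by (simp only: c_def)
qed

theorem mainTheorem2:
  "\<exists>C :: real. C > 0 \<and>
     (\<forall>(n :: nat) (f :: bool list \<Rightarrow> bool list \<Rightarrow> bool). n \<ge> 2 \<longrightarrow>
        real (Qpar n f) \<le> C * 2 ^ (2 * R1pub n f) * log 2 (real n))"
  by (intro exI[of _ 12672]) (simp add: Qpar_le_log)

end
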